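(* For every PTM $M$, the probabilistic function $PTC_M:\mathbb{N}\times\mathbb{N}\to\mathcal D(\mathbb{N})$ defined by $PTC_M(x,y)(0)=PT^0_M(x,y)$, $PTC_M(x,y)(1)=PT^1_M(x,y)$ and $PTC_M(x,y)(z)=0$ for $z\ge2$ belongs to $\mathscr{PR}$.
   Context: PTM: Turing machine with two transition functions $\delta_0,\delta_1$ (each applied with probability $1/2$) defined on non-final configurations; initial configuration on input string $w=a\cdot v$ is $\langle\varepsilon,a,v,q_s\rangle$; final configurations are $\langle s,a,\varepsilon,q\rangle$ with $q$ final. $n\mapsto\overline n$ is the length-lexicographic bijection $\mathbb{N}\to\{0,1\}^*$ ($\overline0=\varepsilon,\overline1=0,\overline2=1,\overline3=00,\dots$). Computation tree $CT_M(x)$: nodes are binary strings, root $\varepsilon$ labelled by the initial configuration on $\overline x$, a node $b$ labelled by a non-final $C$ has children $b0,b1$ labelled $\delta_0(C),\delta_1(C)$, nodes labelled by final configurations have no children; $y\in\mathbb{N}$ denotes node $\overline y$, a leaf if it is in the tree with final label. $PT_M(x,y)=2^{-|\overline y|}$. Recursively in $y$: if $y$ is not a leaf of $CT_M(x)$, $PT^1_M(x,y)=1$, $PT^0_M(x,y)=0$; otherwise $PT^0_M(x,y)=PT_M(x,y)/\prod_{k<y}PT^1_M(x,k)$ and $PT^1_M(x,y)=1-PT^0_M(x,y)$. $\mathcal D(X)$: functions $X\to[0,1]$ with sum $\le1$; PF: function $\mathbb{N}^k\to\mathcal D(\mathbb{N})$. Basic PFs: $z(n)(0)=1$; $s(n)(n+1)=1$;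 $\Pi^n_m(k_1,\dots,k_n)(k_m)=1$; $r(x)(x)=r(x)(x+1)=1/2$ (other values $0$). Generalized composition $(f\odot(g_1,\dots,g_n))(\vec x)(y)=\sum_{z_1,\dots,z_n} f(z_1,\dots,z_n)(y)\prod_i g_i(\vec x)(z_i)$; primitive recursion $h(\vec x,0)=f(\vec x)$, $h(\vec x,y+1)(w)=\sum_z h(\vec x,y)(z)\, g(\vec x,y,z)(w)$; minimization $\mu f(\vec x)(y)=f(\vec x,y)(0)\prod_{z<y}\sum_{k>0}f(\vec x,z)(k)$. $\mathscr{PR}$ is the smallest class of PFs containing the basic PFs and closed under these operations. *)

theory Defs
  imports "HOL-Analysis.Analysis"
begin

datatype move = MoveL | MoveR

record ('q, 's) ptm =
  blank_sym :: 's
  zero_sym  :: 's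
  one_sym   :: 's
  init_state :: 'q
  final_states :: "'q set"
  delta0 :: "'q \<Rightarrow> 's \<Rightarrow> 'q \<times> 's \<times> move"
  delta1 :: "'q \<Rightarrow> 's \<Rightarrow> 'q \<times> 's \<times> move"

definition wf_ptm :: "('q, 's) ptm \<Rightarrow> bool" where
  "wf_ptm M \<longleftrightarrow> blank_sym M \<noteq> zero_sym M \<and> blank_sym M \<noteq> one_sym M \<and> zero_sym M \<noteq> one_sym M"

text \<open>Configuration \<langle>s, a, t, q\<rangle>: tape content to the left of the head (in natural order),
  the scanned symbol, tape content to the right of the head, and the state.\<close>
type_synonym ('q, 's) config = "'s list \<times> 's \<times> 's list \<times> 'q"

definition is_final :: "('q, 's) ptm \<Rightarrow> ('q, 's) config \<Rightarrow> bool" where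
  "is_final M C = (case C of (s, a, t, q) \<Rightarrow> t = [] \<and> q \<in> final_states M)"

definition apply_delta ::
  "('q, 's) ptm \<Rightarrow> ('q \<Rightarrow> 's \<Rightarrow> 'q \<times> 's \<times> move) \<Rightarrow> ('q, 's) config \<Rightarrow> ('q, 's) config" where
  "apply_delta M d C = (case C of (s, a, t, q) \<Rightarrow>
     (case d q a of (q', b, m) \<Rightarrow>
       (case m of
          MoveL \<Rightarrow> (if s = [] then ([], blank_sym M, b # t, q')
                   else (butlast s, last s, b # t, q'))
        | MoveR \<Rightarrow> (if t = [] then (s @ [b], blank_sym M, [], q')
                   else (s @ [b], hd t, tl t, q')))))"

definition step :: "('q, 's) ptm \<Rightarrow> bool \<Rightarrow> ('q, 's) config \<Rightarrow> ('q, 's) config" where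
  "step M i C = (if i then apply_delta M (delta1 M) C else apply_delta M (delta0 M) C)"

definition bit_sym :: "('q, 's) ptm \<Rightarrow> bool \<Rightarrow> 's" where
  "bit_sym M b = (if b then one_sym M else zero_sym M)"

definition initial_config :: "('q, 's) ptm \<Rightarrow> bool list \<Rightarrow> ('q, 's) config" where
  "initial_config M w = (case map (bit_sym M) w of
       [] \<Rightarrow> ([], blank_sym M, [], init_state M)
     | a # v \<Rightarrow> ([], a, v, init_state M))"

text \<open>Length-lexicographic bijection n \<mapsto> overline n from nat to binary strings.\<close>
fun nat_to_bin :: "nat \<Rightarrow> bool list" where
  "nat_to_bin 0 = []"
| "nat_to_bin (Suc n) = nat_to_bin (n div 2) @ [odd n]"

text \<open>Computation tree: label of node b, starting from configuration C; None if the node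
  is not in the tree (some proper ancestor is labelled by a final configuration).\<close>
fun tree_label :: "('q, 's) ptm \<Rightarrow> ('q, 's) config \<Rightarrow> bool list \<Rightarrow> ('q, 's) config option" where
  "tree_label M C [] = Some C"
| "tree_label M C (i # bs) = (if is_final M C then None else tree_label M (step M i C) bs)"

definition CT_label :: "('q, 's) ptm \<Rightarrow> nat \<Rightarrow> bool list \<Rightarrow> ('q, 's) config option" where
  "CT_label M x b = tree_label M (initial_config M (nat_to_bin x)) b"

definition is_leaf :: "('q, 's) ptm \<Rightarrow> nat \<Rightarrow> nat \<Rightarrow> bool" where
  "is_leaf M x y \<longleftrightarrow> (\<exists>C. CT_label M x (nat_to_bin y) = Some C \<and> is_final M C)"

definition PT :: "('q, 's) ptm \<Rightarrow> nat \<Rightarrow> nat \<Rightarrow> real" where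
  "PT M x y = (1/2) ^ length (nat_to_bin y)"

text \<open>PT_prod M x y = \<Prod>k<y. PT^1_M(x,k) (see lemma PT_prod_eq below).\<close>
fun PT_prod :: "('q, 's) ptm \<Rightarrow> nat \<Rightarrow> nat \<Rightarrow> real" where
  "PT_prod M x 0 = 1"
| "PT_prod M x (Suc y) = PT_prod M x y *
      (if is_leaf M x y then 1 - PT M x y / PT_prod M x y else 1)"

definition PT0 :: "('q, 's) ptm \<Rightarrow> nat \<Rightarrow> nat \<Rightarrow> real" where
  "PT0 M x y = (if is_leaf M x y then PT M x y / PT_prod M x y else 0)"

definition PT1 :: "('q, 's) ptm \<Rightarrow> nat \<Rightarrow> nat \<Rightarrow> real" where
  "PT1 M x y = (if is_leaf M x y then 1 - PT0 M x y else 1)"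

lemma PT_prod_eq: "PT_prod M x y = (\<Prod>k<y. PT1 M x k)"
  by (induction y) (simp_all add: PT1_def PT0_def)

definition PTC :: "('q, 's) ptm \<Rightarrow> nat \<Rightarrow> nat \<Rightarrow> nat \<Rightarrow> real" where
  "PTC M x y z = (if z = 0 then PT0 M x y else if z = 1 then PT1 M x y else 0)"

text \<open>A k-ary probabilistic function is represented as a map from argument lists
  (only lists of length k are relevant) to sub-distributions on nat.\<close>
type_synonym pf = "nat list \<Rightarrow> nat \<Rightarrow> real"

definition pf_zero :: pf where "pf_zero xs y = (if y = 0 then 1 else 0)"
definition pf_succ :: pf where "pf_succ xs y = (if y = hd xs + 1 then 1 else 0)"
definition pf_proj :: "nat \<Rightarrow> pf" where "pf_proj m xs y = (if y = xs ! (m - 1) then 1 else 0)"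
definition pf_rand :: pf where
  "pf_rand xs y = (if y = hd xs \<or> y = hd xs + 1 then 1/2 else 0)"

definition pf_comp :: "pf \<Rightarrow> pf list \<Rightarrow> pf" where
  "pf_comp f gs xs y =
     (\<Sum>\<^sub>\<infinity>zs\<in>{zs. length zs = length gs}. f zs y * (\<Prod>i<length gs. (gs ! i) xs (zs ! i)))"

fun pf_primrec_aux :: "pf \<Rightarrow> pf \<Rightarrow> nat list \<Rightarrow> nat \<Rightarrow> nat \<Rightarrow> real" where
  "pf_primrec_aux f g xs 0 = f xs"
| "pf_primrec_aux f g xs (Suc y) =
     (\<lambda>w. \<Sum>\<^sub>\<infinity>z\<in>UNIV. pf_primrec_aux f g xs y z * g (xs @ [y, z]) w)"

definition pf_primrec :: "pf \<Rightarrow> pf \<Rightarrow> pf" where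
  "pf_primrec f g ys = pf_primrec_aux f g (butlast ys) (last ys)"

definition pf_mu :: "pf \<Rightarrow> pf" where
  "pf_mu f xs y = f (xs @ [y]) 0 * (\<Prod>z<y. \<Sum>\<^sub>\<infinity>k\<in>{0<..}. f (xs @ [z]) k)"

inductive PR :: "nat \<Rightarrow> pf \<Rightarrow> bool" where
  PR_zero: "PR 1 pf_zero"
| PR_succ: "PR 1 pf_succ"
| PR_proj: "1 \<le> m \<Longrightarrow> m \<le> n \<Longrightarrow> PR n (pf_proj m)"
| PR_rand: "PR 1 pf_rand"
| PR_comp: "PR (length gs) f \<Longrightarrow> (\<forall>g\<in>set gs. PR k g) \<Longrightarrow> PR k (pf_comp f gs)"
| PR_primrec: "PR k f \<Longrightarrow> PR (k + 2) g \<Longrightarrow> PR (k + 1) (pf_primrec f g)"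
| PR_mu: "PR (k + 1) f \<Longrightarrow> PR k (pf_mu f)"

end

theory Submission
  imports Defs "HOL-Library.Countable"
begin

text \<open>
  PTC_M(x, y) is a distribution on {0, 1}, so it suffices to produce a
  primitive recursive mixture: draw z with probability 2^-(z+1) (a fair coin tossed until
  it shows 0, i.e. minimization applied to the basic function r) and return a bit
  decide(x, y, z) computed deterministically.  At a leaf y, PT0_M(x, y) = 1 / D(x, y) where
  D(x, y) = 2^|y| (1 - sum of 2^-|k| over the leaves k < y) is a natural number; answering 0
  exactly when digit z of the binary expansion of 1/D is 1 gives probability 1/D for 0.
\<close>

lemma infsum_single_support:
  fixes f :: "'a \<Rightarrow> real"
  assumes "a \<in> A" "\<And>x. x \<in> A \<Longrightarrow> x \<noteq> a \<Longrightarrow> f x = 0"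
  shows "infsum f A = f a"
proof -
  have "infsum f A = infsum f {a}"
    by (rule infsum_cong_neutral) (use assms in auto)
  thus ?thesis by simp
qed

lemma prod_indicator:
  "(\<Prod>i<(n::nat). (if P i then 1 else 0 :: real)) = (if \<forall>i<n. P i then 1 else 0)"
  by (induction n) (auto simp: less_Suc_eq)

text \<open>A member of PR is only relevant on argument lists of its arity.  PR_rep k F says that
  F agrees with some k-ary member of PR on all lists of length k.\<close>
definition PR_rep :: "nat \<Rightarrow> pf \<Rightarrow> bool" where
  "PR_rep k F \<longleftrightarrow> (\<exists>f. PR k f \<and> (\<forall>xs. length xs = k \<longrightarrow> f xs = F xs))"

lemma PR_rep_cong: "PR_rep k F \<Longrightarrow> (\<And>xs. length xs = k \<Longrightarrow> F xs = G xs) \<Longrightarrow> PR_rep k G"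
  unfolding PR_rep_def by metis

lemma PR_rep_PR: "PR k f \<Longrightarrow> PR_rep k f"
  unfolding PR_rep_def by blast

definition point_pf :: "(nat list \<Rightarrow> nat) \<Rightarrow> pf" where
  "point_pf g xs y = (if y = g xs then 1 else 0)"

definition DPR :: "nat \<Rightarrow> (nat list \<Rightarrow> nat) \<Rightarrow> bool" where
  "DPR k g \<longleftrightarrow> PR_rep k (point_pf g)"

lemma DPR_cong: "DPR k f \<Longrightarrow> (\<And>xs. length xs = k \<Longrightarrow> f xs = g xs) \<Longrightarrow> DPR k g"
  unfolding DPR_def by (erule PR_rep_cong) (simp add: point_pf_def fun_eq_iff)

text \<open>Composition with deterministic arguments: the sum over the intermediate values
  collapses to the single point where all arguments are hit.\<close>
lemma PR_rep_comp:
  assumes F: "PR_rep (length gs) F" and G: "\<forall>g\<in>set gs. DPR k g"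
  shows "PR_rep k (\<lambda>xs. F (map (\<lambda>g. g xs) gs))"
proof -
  obtain f where f: "PR (length gs) f" "\<And>xs. length xs = length gs \<Longrightarrow> f xs = F xs"
    using F unfolding PR_rep_def by blast
  define fs where "fs = map (\<lambda>g. SOME h. PR k h \<and> (\<forall>xs. length xs = k \<longrightarrow> h xs = point_pf g xs)) gs"
  have fs: "PR k (fs!i) \<and> (\<forall>xs. length xs = k \<longrightarrow> (fs!i) xs = point_pf (gs!i) xs)"
    if "i < length gs" for i
  proof -
    have "\<exists>h. PR k h \<and> (\<forall>xs. length xs = k \<longrightarrow> h xs = point_pf (gs!i) xs)"
      using G that unfolding DPR_def PR_rep_def by auto
    from someI_ex[OF this] show ?thesis using that by (simp add: fs_def)
  qed
  have lfs: "length fs = length gs" by (simp add: fs_def)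
  have "PR k (pf_comp f fs)"
    using f(1) lfs fs by (intro PR_comp) (auto simp: in_set_conv_nth)
  moreover have "pf_comp f fs xs = F (map (\<lambda>g. g xs) gs)" if "length xs = k" for xs
  proof
    fix y
    let ?v = "map (\<lambda>g. g xs) gs"
    have "pf_comp f fs xs y = (\<Sum>\<^sub>\<infinity>zs\<in>{zs. length zs = length gs}.
            f zs y * (\<Prod>i<length gs. (if zs ! i = (gs ! i) xs then 1 else 0)))"
      unfolding pf_comp_def lfs
      by (intro infsum_cong arg_cong2[where f="(*)"] refl prod.cong) (auto simp: fs that point_pf_def)
    also have "\<dots> = f ?v y * (\<Prod>i<length gs. (if ?v ! i = (gs ! i) xs then 1 else 0))"
    proof (rule infsum_single_support)
      fix zs assume "zs \<in> {zs. length zs = length gs}" "zs \<noteq> ?v"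
      then obtain i where "i < length gs" "zs ! i \<noteq> ?v ! i"
        by (metis (mono_tags, lifting) length_map mem_Collect_eq nth_equalityI)
      thus "f zs y * (\<Prod>i<length gs. (if zs ! i = (gs ! i) xs then 1 else 0)) = 0"
        by (subst prod_indicator) auto
    qed simp
    also have "\<dots> = F ?v y" by (subst prod_indicator) (simp add: f(2))
    finally show "pf_comp f fs xs y = F ?v y" .
  qed
  ultimately show ?thesis unfolding PR_rep_def by blast
qed

lemma primrec_aux_cong:
  assumes "\<And>xs. length xs = k \<Longrightarrow> f xs = F xs" "\<And>xs. length xs = k + 2 \<Longrightarrow> g xs = G xs"
    "length xs = k"
  shows "pf_primrec_aux f g xs n = pf_primrec_aux F G xs n"
  using assms by (induction n) auto

lemma PR_rep_primrec:
  assumes "PR_rep k F" "PR_rep (k+2) G"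
  shows "PR_rep (k+1) (\<lambda>ys. pf_primrec_aux F G (butlast ys) (last ys))"
proof -
  obtain f g where "PR k f" "\<And>xs. length xs = k \<Longrightarrow> f xs = F xs"
    "PR (k+2) g" "\<And>xs. length xs = k+2 \<Longrightarrow> g xs = G xs"
    using assms unfolding PR_rep_def by metis
  thus ?thesis unfolding PR_rep_def
    using PR_primrec[of k f g]
    by (intro exI[of _ "pf_primrec f g"]) (auto intro!: primrec_aux_cong simp: pf_primrec_def)
qed

lemma PR_rep_mu:
  assumes "PR_rep (k+1) F"
  shows "PR_rep k (pf_mu F)"
proof -
  obtain f where "PR (k+1) f" "\<And>xs. length xs = k+1 \<Longrightarrow> f xs = F xs"
    using assms unfolding PR_rep_def by metis
  thus ?thesis unfolding PR_rep_def
    by (intro exI[of _ "pf_mu f"]) (auto intro!: PR_mu simp: pf_mu_def)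
qed

section \<open>Deterministic functions in PR\<close>

lemma DPR_zero1: "DPR 1 (\<lambda>_. 0)"
  unfolding DPR_def
  by (rule PR_rep_cong[OF PR_rep_PR[OF PR_zero]]) (simp add: point_pf_def pf_zero_def fun_eq_iff)

lemma DPR_succ1: "DPR 1 (\<lambda>xs. Suc (xs!0))"
  unfolding DPR_def
  by (rule PR_rep_cong[OF PR_rep_PR[OF PR_succ]])
    (auto simp: point_pf_def pf_succ_def fun_eq_iff length_Suc_conv)

lemma DPR_proj: "i < k \<Longrightarrow> DPR k (\<lambda>xs. xs!i)"
  unfolding DPR_def
  by (rule PR_rep_cong[OF PR_rep_PR[OF PR_proj[of "Suc i" k]]]) (auto simp: point_pf_def pf_proj_def fun_eq_iff)

lemma DPR_comp:
  assumes "DPR (length gs) f" "\<forall>g\<in>set gs. DPR k g"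
  shows "DPR k (\<lambda>xs. f (map (\<lambda>g. g xs) gs))"
proof -
  have "(\<lambda>xs. point_pf f (map (\<lambda>g. g xs) gs)) = point_pf (\<lambda>xs. f (map (\<lambda>g. g xs) gs))"
    by (auto simp: point_pf_def fun_eq_iff)
  thus ?thesis using PR_rep_comp[of gs "point_pf f" k] assms unfolding DPR_def by metis
qed

lemma DPR_op1: "DPR 1 (\<lambda>xs. h (xs!0)) \<Longrightarrow> DPR k g \<Longrightarrow> DPR k (\<lambda>xs. h (g xs))"
  using DPR_comp[of "[g]" "\<lambda>xs. h (xs!0)" k] by simp

lemma DPR_op2:
  "DPR 2 (\<lambda>xs. h (xs!0) (xs!1)) \<Longrightarrow> DPR k g1 \<Longrightarrow> DPR k g2 \<Longrightarrow> DPR k (\<lambda>xs. h (g1 xs) (g2 xs))"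
  using DPR_comp[of "[g1,g2]" "\<lambda>xs. h (xs!0) (xs!1)" k] by (simp add: numeral_2_eq_2)

fun prec :: "(nat list \<Rightarrow> nat) \<Rightarrow> (nat list \<Rightarrow> nat) \<Rightarrow> nat list \<Rightarrow> nat \<Rightarrow> nat" where
  "prec a G xs 0 = a xs"
| "prec a G xs (Suc n) = G (xs @ [n, prec a G xs n])"

lemma primrec_aux_point:
  "pf_primrec_aux (point_pf a) (point_pf G) xs n = point_pf (\<lambda>xs. prec a G xs n) xs"
proof (induction n)
  case (Suc n)
  show ?case
  proof
    fix w
    have "pf_primrec_aux (point_pf a) (point_pf G) xs (Suc n) w =
      (\<Sum>\<^sub>\<infinity>z\<in>UNIV. point_pf (\<lambda>xs. prec a G xs n) xs z * point_pf G (xs @ [n, z]) w)"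
      using Suc by simp
    also have "\<dots> = point_pf G (xs @ [n, prec a G xs n]) w"
      by (subst infsum_single_support[of "prec a G xs n"]) (auto simp: point_pf_def)
    finally show "pf_primrec_aux (point_pf a) (point_pf G) xs (Suc n) w
                  = point_pf (\<lambda>xs. prec a G xs (Suc n)) xs w"
      by (simp add: point_pf_def)
  qed
qed simp

lemma DPR_prec:
  assumes "DPR k a" "DPR (k+2) G" "DPR k c"
  shows "DPR k (\<lambda>xs. prec a G xs (c xs))"
proof -
  have "(\<lambda>ys. pf_primrec_aux (point_pf a) (point_pf G) (butlast ys) (last ys))
        = point_pf (\<lambda>ys. prec a G (butlast ys) (last ys))"
    by (auto simp: primrec_aux_point point_pf_def fun_eq_iff)
  hence rec: "DPR (k+1) (\<lambda>ys. prec a G (butlast ys) (last ys))"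
    using PR_rep_primrec[of k "point_pf a" "point_pf G"] assms unfolding DPR_def by simp
  let ?gs = "map (\<lambda>i xs. xs!i) [0..<k] @ [c]"
  have "DPR k (\<lambda>xs. (\<lambda>ys. prec a G (butlast ys) (last ys)) (map (\<lambda>g. g xs) ?gs))"
    by (rule DPR_comp) (use rec assms(3) in \<open>auto intro: DPR_proj\<close>)
  thus ?thesis
    by (rule DPR_cong) (simp add: o_def, metis map_nth)
qed

lemma DPR_mu:
  assumes "DPR (k+1) g" "\<And>xs. length xs = k \<Longrightarrow> \<exists>y. g (xs@[y]) = 0"
  shows "DPR k (\<lambda>xs. LEAST y. g (xs@[y]) = 0)"
proof -
  have "PR_rep k (pf_mu (point_pf g))" using assms(1) PR_rep_mu unfolding DPR_def by blast
  moreover have "pf_mu (point_pf g) xs = point_pf (\<lambda>xs. LEAST y. g (xs@[y]) = 0) xs"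
    if len: "length xs = k" for xs
  proof
    fix y
    have nonzero: "(\<Sum>\<^sub>\<infinity>j\<in>{0<..}. point_pf g (xs @ [z]) j) = (if g (xs@[z]) = 0 then 0 else 1)" for z
    proof (cases "g (xs@[z]) = 0")
      case True thus ?thesis by (subst infsum_0) (auto simp: point_pf_def)
    next
      case False thus ?thesis
        by (subst infsum_single_support[of "g (xs@[z])"]) (auto simp: point_pf_def)
    qed
    have survive: "(\<Prod>z<y. if g (xs@[z]) = 0 then 0 else 1::real)
                   = (if \<forall>z<y. g (xs@[z]) \<noteq> 0 then 1 else 0)"
      by (induction y) (auto simp: less_Suc_eq)
    obtain y0 where y0: "g (xs@[y0]) = 0" using assms(2)[OF len] by blast
    have "(g (xs@[y]) = 0 \<and> (\<forall>z<y. g (xs@[z]) \<noteq> 0)) \<longleftrightarrow> y = (LEAST y. g (xs@[y]) = 0)"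
      using LeastI[of "\<lambda>y. g (xs@[y]) = 0", OF y0] not_less_Least[of _ "\<lambda>y. g (xs@[y]) = 0"]
      by (metis (mono_tags, lifting) linorder_neqE_nat)
    thus "pf_mu (point_pf g) xs y = point_pf (\<lambda>xs. LEAST y. g (xs@[y]) = 0) xs y"
      unfolding pf_mu_def nonzero survive by (auto simp: point_pf_def)
  qed
  ultimately show ?thesis unfolding DPR_def using PR_rep_cong by blast
qed

text \<open>Closure properties of DPR, collected so that intro dpr decomposes a term
  into its primitive recursive building blocks.\<close>
named_theorems dpr

declare DPR_proj[dpr]

lemma DPR_Suc[dpr]: "DPR k f \<Longrightarrow> DPR k (\<lambda>xs. Suc (f xs))"
  by (rule DPR_op1[OF DPR_succ1])

text \<open>For arity 0 the constant 0 is obtained by a trivial minimization.\<close>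
lemma DPR_zero: "DPR k (\<lambda>_. 0)"
proof -
  have "DPR (k+1) (\<lambda>_. 0)"
    using DPR_op1[OF DPR_zero1 DPR_proj[of 0 "k+1"]] by simp
  thus ?thesis using DPR_mu[of k "\<lambda>_. 0"] by simp
qed

lemma DPR_const[dpr]: "DPR k (\<lambda>_. c)"
  by (induction c) (auto intro: DPR_zero DPR_Suc[where f="\<lambda>_. _", simplified])

lemma DPR_add_base: "DPR 2 (\<lambda>xs. xs!0 + xs!1)"
proof -
  have "DPR 2 (\<lambda>xs. prec (\<lambda>xs. xs!0) (\<lambda>ys. Suc (ys!3)) xs (xs!1))"
    by (intro DPR_prec DPR_proj DPR_Suc) auto
  moreover have "prec (\<lambda>xs. xs!0) (\<lambda>ys. Suc (ys!3)) xs n = xs!0 + n" if "length xs = 2" for xs n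
    using that by (induction n) (auto simp: nth_append numeral_3_eq_3)
  ultimately show ?thesis by (rule DPR_cong) simp
qed

lemma DPR_add[dpr]: "DPR k f \<Longrightarrow> DPR k g \<Longrightarrow> DPR k (\<lambda>xs. f xs + g xs)"
  by (rule DPR_op2[OF DPR_add_base])

lemma DPR_mult_base: "DPR 2 (\<lambda>xs. xs!0 * xs!1)"
proof -
  have "DPR 2 (\<lambda>xs. prec (\<lambda>_. 0) (\<lambda>ys. ys!3 + ys!0) xs (xs!1))"
    by (intro DPR_prec DPR_proj DPR_add DPR_const) auto
  moreover have "prec (\<lambda>_. 0) (\<lambda>ys. ys!3 + ys!0) xs n = xs!0 * n" if "length xs = 2" for xs n
    using that by (induction n) (auto simp: nth_append numeral_3_eq_3)
  ultimately show ?thesis by (rule DPR_cong) simp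
qed

lemma DPR_mult[dpr]: "DPR k f \<Longrightarrow> DPR k g \<Longrightarrow> DPR k (\<lambda>xs. f xs * g xs)"
  by (rule DPR_op2[OF DPR_mult_base])

lemma DPR_pred_base: "DPR 1 (\<lambda>xs. xs!0 - 1)"
proof -
  have "DPR 1 (\<lambda>xs. prec (\<lambda>_. 0) (\<lambda>ys. ys!1) xs (xs!0))"
    by (intro DPR_prec DPR_proj DPR_const) auto
  moreover have "prec (\<lambda>_. 0) (\<lambda>ys. ys!1) xs n = n - 1" if "length xs = 1" for xs n
    using that by (induction n) (auto simp: nth_append)
  ultimately show ?thesis by (rule DPR_cong) simp
qed

lemma DPR_sub_base: "DPR 2 (\<lambda>xs. xs!0 - xs!1)"
proof -
  have "DPR 2 (\<lambda>xs. prec (\<lambda>xs. xs!0) (\<lambda>ys. ys!3 - 1) xs (xs!1))"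
    by (intro DPR_prec DPR_proj DPR_op1[OF DPR_pred_base]) auto
  moreover have "prec (\<lambda>xs. xs!0) (\<lambda>ys. ys!3 - 1) xs n = xs!0 - n" if "length xs = 2" for xs n
    using that by (induction n) (auto simp: nth_append numeral_3_eq_3)
  ultimately show ?thesis by (rule DPR_cong) simp
qed

lemma DPR_sub[dpr]: "DPR k f \<Longrightarrow> DPR k g \<Longrightarrow> DPR k (\<lambda>xs. f xs - g xs)"
  by (rule DPR_op2[OF DPR_sub_base])

lemma DPR_pow_base: "DPR 1 (\<lambda>xs. 2 ^ (xs!0))"
proof -
  have "DPR 1 (\<lambda>xs. prec (\<lambda>_. 1) (\<lambda>ys. ys!2 * 2) xs (xs!0))"
    by (intro DPR_prec dpr) auto
  moreover have "prec (\<lambda>_. 1) (\<lambda>ys. ys!2 * 2) xs n = 2 ^ n" if "length xs = 1" for xs n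
    using that by (induction n) (auto simp: nth_append)
  ultimately show ?thesis by (rule DPR_cong) simp
qed

lemma DPR_pow[dpr]: "DPR k f \<Longrightarrow> DPR k (\<lambda>xs. 2 ^ f xs)"
  by (rule DPR_op1[OF DPR_pow_base])

definition DPRB :: "nat \<Rightarrow> (nat list \<Rightarrow> bool) \<Rightarrow> bool" where
  "DPRB k P \<longleftrightarrow> DPR k (\<lambda>xs. if P xs then 1 else 0)"

lemma DPR_if[dpr]: "DPRB k P \<Longrightarrow> DPR k u \<Longrightarrow> DPR k v \<Longrightarrow> DPR k (\<lambda>xs. if P xs then u xs else v xs)"
proof -
  assume a: "DPRB k P" "DPR k u" "DPR k v"
  have "DPR k (\<lambda>xs. (if P xs then 1 else 0) * u xs + (v xs - (if P xs then 1 else 0) * v xs))"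
    using a unfolding DPRB_def by (intro DPR_add DPR_mult DPR_sub)
  thus ?thesis by (rule DPR_cong) auto
qed

lemma DPRB_eq[dpr]: "DPR k f \<Longrightarrow> DPR k g \<Longrightarrow> DPRB k (\<lambda>xs. f xs = g xs)"
proof -
  assume "DPR k f" "DPR k g"
  hence "DPR k (\<lambda>xs. Suc (f xs) - (f xs + ((f xs - g xs) + (g xs - f xs))))"
    by (intro dpr)
  thus ?thesis unfolding DPRB_def by (rule DPR_cong) auto
qed

lemma DPRB_less[dpr]: "DPR k f \<Longrightarrow> DPR k g \<Longrightarrow> DPRB k (\<lambda>xs. f xs < g xs)"
proof -
  assume "DPR k f" "DPR k g"
  hence "DPR k (\<lambda>xs. (g xs - f xs) - (g xs - Suc (f xs)))"
    by (intro dpr)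
  thus ?thesis unfolding DPRB_def by (rule DPR_cong) auto
qed

lemma DPRB_le[dpr]: "DPR k f \<Longrightarrow> DPR k g \<Longrightarrow> DPRB k (\<lambda>xs. f xs \<le> g xs)"
proof -
  assume "DPR k f" "DPR k g"
  hence "DPRB k (\<lambda>xs. f xs < Suc (g xs))" by (intro dpr)
  thus ?thesis unfolding DPRB_def by (rule DPR_cong) auto
qed

lemma DPRB_not[dpr]: "DPRB k P \<Longrightarrow> DPRB k (\<lambda>xs. \<not> P xs)"
proof -
  assume "DPRB k P"
  hence "DPR k (\<lambda>xs. if P xs then 0 else 1)" by (intro dpr)
  thus ?thesis unfolding DPRB_def by (rule DPR_cong) auto
qed

lemma DPRB_and[dpr]: "DPRB k P \<Longrightarrow> DPRB k Q \<Longrightarrow> DPRB k (\<lambda>xs. P xs \<and> Q xs)"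
proof -
  assume "DPRB k P" "DPRB k Q"
  hence "DPR k (\<lambda>xs. if P xs then (if Q xs then 1 else 0) else 0)"
    by (intro dpr)
  thus ?thesis unfolding DPRB_def by (rule DPR_cong) auto
qed

lemma DPRB_or[dpr]: "DPRB k P \<Longrightarrow> DPRB k Q \<Longrightarrow> DPRB k (\<lambda>xs. P xs \<or> Q xs)"
proof -
  assume "DPRB k P" "DPRB k Q"
  hence "DPRB k (\<lambda>xs. \<not> (\<not> P xs \<and> \<not> Q xs))" by (intro dpr)
  thus ?thesis unfolding DPRB_def by (rule DPR_cong) auto
qed

text \<open>Division is the least q with x < d * (q + 1), a total search when d > 0;
  division by 0 is handled separately.\<close>
lemma DPR_div_base: "DPR 2 (\<lambda>xs. xs!0 div xs!1)"
proof -
  let ?g = "\<lambda>ys. if ys!1 = 0 then 0 else Suc (ys!0) - ys!1 * Suc (ys!2)"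
  have search: "DPR 2 (\<lambda>xs. LEAST q. ?g (xs@[q]) = 0)"
  proof (rule DPR_mu)
    show "DPR (2+1) ?g" by (intro dpr) auto
    fix xs :: "nat list" assume l: "length xs = 2"
    have "Suc (xs!0) \<le> xs!1 * Suc (xs!0)" if "xs!1 \<noteq> 0"
      using that mult_le_mono1[of 1 "xs!1" "Suc (xs!0)"] by simp
    thus "\<exists>y. ?g (xs@[y]) = 0"
      using l by (intro exI[of _ "xs!0"]) (simp add: nth_append)
  qed
  have least_quotient: "(LEAST q. (if d = 0 then 0 else Suc x - d * Suc q) = 0) = x div d"
    for x d :: nat
  proof (cases "d = 0")
    case False
    show ?thesis
    proof (rule Least_equality)
      show "(if d = 0 then 0 else Suc x - d * Suc (x div d)) = 0"
        using False by (simp add: dividend_less_times_div Suc_le_eq)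
      fix q assume "(if d = 0 then 0 else Suc x - d * Suc q) = 0"
      hence "x < d * Suc q" using False by simp
      hence "x div d < Suc q" using False by (simp add: div_less_iff_less_mult mult.commute)
      thus "x div d \<le> q" by simp
    qed
  qed simp
  from search show ?thesis
  proof (rule DPR_cong)
    fix xs :: "nat list" assume "length xs = 2"
    hence "(xs@[q])!0 = xs!0" "(xs@[q])!1 = xs!1" "(xs@[q])!2 = q" for q by (auto simp: nth_append)
    thus "(LEAST q. ?g (xs@[q]) = 0) = xs!0 div xs!1"
      by (simp only: least_quotient)
  qed
qed

lemma DPR_div[dpr]: "DPR k f \<Longrightarrow> DPR k g \<Longrightarrow> DPR k (\<lambda>xs. f xs div g xs)"
  by (rule DPR_op2[OF DPR_div_base])

lemma DPR_mod[dpr]: "DPR k f \<Longrightarrow> DPR k g \<Longrightarrow> DPR k (\<lambda>xs. f xs mod g xs)"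
proof -
  assume "DPR k f" "DPR k g"
  hence "DPR k (\<lambda>xs. f xs - (f xs div g xs) * g xs)" by (intro dpr)
  thus ?thesis by (rule DPR_cong) (simp add: minus_div_mult_eq_mod)
qed

lemma DPR_iter:
  assumes "DPR 1 (\<lambda>xs. s (xs!0))" "DPR k a" "DPR k c"
  shows "DPR k (\<lambda>xs. (s ^^ c xs) (a xs))"
proof -
  have "DPR k (\<lambda>xs. prec a (\<lambda>ys. s (ys ! (k+1))) xs (c xs))"
    by (intro DPR_prec assms DPR_op1[OF assms(1)] DPR_proj) auto
  moreover have "prec a (\<lambda>ys. s (ys ! (k+1))) xs n = (s ^^ n) (a xs)" if "length xs = k" for xs n
    using that by (induction n) (auto simp: nth_append)
  ultimately show ?thesis by (rule DPR_cong) simp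
qed

text \<open>A function with finite support is a finite case distinction, hence in DPR.\<close>
lemma DPR_finite_support1:
  assumes "finite {n. h n \<noteq> 0}"
  shows "DPR 1 (\<lambda>xs. h (xs!0))"
proof -
  have "\<forall>h. {n. h n \<noteq> 0} \<subseteq> S \<longrightarrow> DPR 1 (\<lambda>xs. h (xs!0))" if "finite S" for S
    using that
  proof (induction S rule: finite_induct)
    case empty
    show ?case
    proof (intro allI impI)
      fix h :: "nat \<Rightarrow> nat" assume "{n. h n \<noteq> 0} \<subseteq> {}"
      hence "h = (\<lambda>_. 0)" by auto
      thus "DPR 1 (\<lambda>xs. h (xs!0))" by (simp add: DPR_const)
    qed
  next
    case (insert a S)
    show ?case
    proof (intro allI impI)
      fix h :: "nat \<Rightarrow> nat" assume "{n. h n \<noteq> 0} \<subseteq> insert a S"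
      hence "{n. (h(a:=0)) n \<noteq> 0} \<subseteq> S" by auto
      hence "DPR 1 (\<lambda>xs. if xs!0 = a then h a else (h(a:=0)) (xs!0))"
        using insert.IH by (intro dpr) auto
      thus "DPR 1 (\<lambda>xs. h (xs!0))" by (rule DPR_cong) auto
    qed
  qed
  thus ?thesis using assms by blast
qed

lemma DPR_finite_support: "finite {n. h n \<noteq> 0} \<Longrightarrow> DPR k f \<Longrightarrow> DPR k (\<lambda>xs. h (f xs))"
  by (rule DPR_op1[OF DPR_finite_support1])

text \<open>Finite tuples of numbers, and hence configurations, are coded by iterated pairing.
  The diagonal index of a code is found by a bounded search.\<close>
definition tri :: "nat \<Rightarrow> nat" where "tri w = w * Suc w div 2"
definition pair :: "nat \<Rightarrow> nat \<Rightarrow> nat" where "pair a b = tri (a + b) + b"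
definition diag :: "nat \<Rightarrow> nat" where "diag n = (LEAST w. Suc n - tri (Suc w) = 0)"
definition psnd :: "nat \<Rightarrow> nat" where "psnd n = n - tri (diag n)"
definition pfst :: "nat \<Rightarrow> nat" where "pfst n = diag n - psnd n"

lemma tri_Suc: "tri (Suc w) = tri w + Suc w"
proof -
  have "Suc w * Suc (Suc w) = w * Suc w + 2 * Suc w" by simp
  thus ?thesis unfolding tri_def by simp
qed

lemma tri_mono: "w \<le> w' \<Longrightarrow> tri w \<le> tri w'"
  unfolding tri_def by (intro div_le_mono mult_le_mono) auto

lemma diag_pair: "diag (pair a b) = a + b"
  unfolding diag_def
proof (rule Least_equality)
  show "Suc (pair a b) - tri (Suc (a + b)) = 0" by (simp add: pair_def tri_Suc)
  fix w assume "Suc (pair a b) - tri (Suc w) = 0"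
  hence "pair a b < tri (Suc w)" by simp
  show "a + b \<le> w"
  proof (rule ccontr)
    assume "\<not> a + b \<le> w"
    hence "tri (Suc w) \<le> tri (a+b)" by (intro tri_mono) auto
    thus False using \<open>pair a b < tri (Suc w)\<close> by (simp add: pair_def)
  qed
qed

lemma psnd_pair[simp]: "psnd (pair a b) = b"
  unfolding psnd_def diag_pair by (simp add: pair_def)

lemma pfst_pair[simp]: "pfst (pair a b) = a"
  by (simp add: pfst_def diag_pair)

lemma DPR_pair[dpr]: "DPR k f \<Longrightarrow> DPR k g \<Longrightarrow> DPR k (\<lambda>xs. pair (f xs) (g xs))"
  unfolding pair_def tri_def by (intro dpr)

lemma DPR_diag_base: "DPR 1 (\<lambda>xs. diag (xs!0))"
proof -
  have search: "DPR 1 (\<lambda>xs. LEAST w. (\<lambda>ys. Suc (ys!0) - tri (Suc (ys!1))) (xs@[w]) = 0)"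
  proof (rule DPR_mu)
    show "DPR (1+1) (\<lambda>ys. Suc (ys!0) - tri (Suc (ys!1)))" unfolding tri_def by (intro dpr) auto
    fix xs :: "nat list" assume "length xs = 1"
    thus "\<exists>y. Suc ((xs @ [y]) ! 0) - tri (Suc ((xs @ [y]) ! 1)) = 0"
      by (intro exI[of _ "xs!0"]) (simp add: nth_append tri_Suc)
  qed
  from search show ?thesis
  proof (rule DPR_cong)
    fix xs :: "nat list" assume "length xs = 1"
    hence "(xs@[q])!0 = xs!0" "(xs@[q])!1 = q" for q by (auto simp: nth_append)
    thus "(LEAST w. (\<lambda>ys. Suc (ys!0) - tri (Suc (ys!1))) (xs@[w]) = 0) = diag (xs!0)"
      by (simp add: diag_def)
  qed
qed

lemma DPR_psnd[dpr]: "DPR k f \<Longrightarrow> DPR k (\<lambda>xs. psnd (f xs))"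
  unfolding psnd_def tri_def by (intro dpr DPR_op1[OF DPR_diag_base])

lemma DPR_pfst[dpr]: "DPR k f \<Longrightarrow> DPR k (\<lambda>xs. pfst (f xs))"
  unfolding pfst_def by (intro dpr DPR_op1[OF DPR_diag_base])

abbreviation bitlen :: "nat \<Rightarrow> nat" where "bitlen y \<equiv> length (nat_to_bin y)"

lemma bitlen_bounds: "2 ^ bitlen y \<le> Suc y \<and> Suc y < 2 ^ Suc (bitlen y)"
proof (induction y rule: nat_to_bin.induct)
  case (2 n)
  let ?l = "bitlen (n div 2)"
  have "2 ^ ?l \<le> Suc (n div 2)" and "Suc (n div 2) < 2 ^ Suc ?l" using 2 by auto
  hence "2 ^ Suc ?l \<le> Suc (Suc n)" and "Suc (Suc n) < 2 ^ Suc (Suc ?l)" by simp_all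
  thus ?case by simp
qed simp

lemma bitlen_le: "bitlen y \<le> y"
proof -
  have "bitlen y < 2 ^ bitlen y" by simp
  thus ?thesis using bitlen_bounds[of y] by linarith
qed

lemma bitlen_mono: "y \<le> y' \<Longrightarrow> bitlen y \<le> bitlen y'"
proof (rule ccontr)
  assume "y \<le> y'" "\<not> bitlen y \<le> bitlen y'"
  hence "(2::nat) ^ Suc (bitlen y') \<le> 2 ^ bitlen y"
    by (intro power_increasing) auto
  thus False using bitlen_bounds[of y] bitlen_bounds[of y'] \<open>y \<le> y'\<close> by linarith
qed

lemma bitlen_least: "bitlen y = (LEAST L. Suc (Suc y) - 2 ^ Suc L = 0)"
proof (rule Least_equality[symmetric])
  show "Suc (Suc y) - 2 ^ Suc (bitlen y) = 0" using bitlen_bounds[of y] by simp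
  fix L assume "Suc (Suc y) - 2 ^ Suc L = 0"
  hence "Suc y < 2 ^ Suc L" by simp
  show "bitlen y \<le> L"
  proof (rule ccontr)
    assume "\<not> ?thesis"
    hence "(2::nat) ^ Suc L \<le> 2 ^ bitlen y" by (intro power_increasing) auto
    thus False using bitlen_bounds[of y] \<open>Suc y < 2 ^ Suc L\<close> by linarith
  qed
qed

lemma DPR_bitlen_base: "DPR 1 (\<lambda>xs. bitlen (xs!0))"
proof -
  have search: "DPR 1 (\<lambda>xs. LEAST w. (\<lambda>ys. Suc (Suc (ys!0)) - 2 ^ (Suc (ys!1))) (xs@[w]) = 0)"
  proof (rule DPR_mu)
    show "DPR (1+1) (\<lambda>ys. Suc (Suc (ys!0)) - 2 ^ (Suc (ys!1)))" by (intro dpr) auto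
    fix xs :: "nat list" assume "length xs = 1"
    thus "\<exists>y. Suc (Suc ((xs @ [y]) ! 0)) - 2 ^ Suc ((xs @ [y]) ! 1) = 0"
      using bitlen_bounds[of "xs!0"] by (intro exI[of _ "bitlen (xs!0)"]) (simp add: nth_append)
  qed
  from search show ?thesis
  proof (rule DPR_cong)
    fix xs :: "nat list" assume "length xs = 1"
    hence "(xs@[q])!0 = xs!0" "(xs@[q])!1 = q" for q by (auto simp: nth_append)
    thus "(LEAST w. (\<lambda>ys. Suc (Suc (ys!0)) - 2 ^ (Suc (ys!1))) (xs@[w]) = 0) = bitlen (xs!0)"
      by (simp add: bitlen_least)
  qed
qed

lemma DPR_bitlen[dpr]: "DPR k f \<Longrightarrow> DPR k (\<lambda>xs. bitlen (f xs))"
  by (rule DPR_op1[OF DPR_bitlen_base])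

text \<open>Value of a digit list in base b, least significant digit first.\<close>
fun digits_val :: "nat \<Rightarrow> nat list \<Rightarrow> nat" where
  "digits_val b [] = 0"
| "digits_val b (d # l) = digits_val b l * b + d"

lemma nat_to_bin_pos: "2 \<le> m \<Longrightarrow> nat_to_bin (m - 1) = nat_to_bin (m div 2 - 1) @ [odd m]"
proof -
  assume "2 \<le> m"
  then obtain n where n: "m = Suc (Suc n)" by (metis add_2_eq_Suc le_Suc_ex)
  thus ?thesis by simp
qed

text \<open>The string of m - 1 is read off from m by repeatedly halving m and collecting parities.\<close>
definition peel_bit :: "nat \<times> bool list \<Rightarrow> nat \<times> bool list" where
  "peel_bit p = (if fst p \<le> 1 then p else (fst p div 2, odd (fst p) # snd p))"

lemma peel_bit_iter:
  "1 \<le> m \<Longrightarrow> bitlen (m - 1) \<le> n \<Longrightarrow> (peel_bit ^^ n) (m, rest) = (1, nat_to_bin (m - 1) @ rest)"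
proof (induction m arbitrary: n rest rule: less_induct)
  case (less m)
  show ?case
  proof (cases "m \<le> 1")
    case True
    hence "m = 1" using less.prems by simp
    have "(peel_bit ^^ n) (1, rest) = (1, rest)" for n by (induction n) (auto simp: peel_bit_def)
    thus ?thesis using \<open>m = 1\<close> by simp
  next
    case False
    hence e: "nat_to_bin (m - 1) = nat_to_bin (m div 2 - 1) @ [odd m]" by (intro nat_to_bin_pos) auto
    with less.prems obtain n' where n': "n = Suc n'" "bitlen (m div 2 - 1) \<le> n'"
      by (cases n) auto
    have "(peel_bit ^^ n) (m, rest) = (peel_bit ^^ n') (m div 2, odd m # rest)"
      using False by (simp add: n'(1) funpow_Suc_right peel_bit_def del: funpow.simps)
    also have "\<dots> = (1, nat_to_bin (m div 2 - 1) @ odd m # rest)"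
      using False n'(2) by (intro less.IH) auto
    finally show ?thesis unfolding e by simp
  qed
qed

text \<open>peel_bit on codes: the state (m, bits) is coded as pair m v, where v is the value
  of the collected bits read as base-b digits, digit d0 for bit 0 and d1 for bit 1.\<close>
definition peel_code :: "nat \<Rightarrow> nat \<Rightarrow> nat \<Rightarrow> nat \<Rightarrow> nat" where
  "peel_code b d0 d1 w = (if pfst w \<le> 1 then w
     else pair (pfst w div 2) (psnd w * b + (if pfst w mod 2 = 1 then d1 else d0)))"

definition bincode :: "nat \<Rightarrow> nat \<Rightarrow> nat \<Rightarrow> nat \<Rightarrow> nat" where
  "bincode b d0 d1 x = psnd ((peel_code b d0 d1 ^^ Suc x) (pair (Suc x) 0))"

lemma bincode_correct:
  "bincode b d0 d1 x = digits_val b (map (\<lambda>c. if c then d1 else d0) (nat_to_bin x))"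
proof -
  define e where "e p = pair (fst p) (digits_val b (map (\<lambda>c. if c then d1 else d0) (snd p)))" for p
  have "peel_code b d0 d1 (e p) = e (peel_bit p)" for p
    by (auto simp: e_def peel_code_def peel_bit_def odd_iff_mod_2_eq_one)
  hence iter: "(peel_code b d0 d1 ^^ n) (e p) = e ((peel_bit ^^ n) p)" for n p
    by (induction n) auto
  have "pair (Suc x) 0 = e (Suc x, [])" by (simp add: e_def)
  hence "bincode b d0 d1 x = psnd (e ((peel_bit ^^ Suc x) (Suc x, [])))"
    by (simp add: bincode_def iter del: funpow.simps)
  also have "(peel_bit ^^ Suc x) (Suc x, []) = (1, nat_to_bin x)"
    using peel_bit_iter[of "Suc x" "Suc x" "[]"] bitlen_le[of x] by simp
  finally show ?thesis by (simp add: e_def)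
qed

lemma DPR_bincode[dpr]: "DPR k f \<Longrightarrow> DPR k (\<lambda>xs. bincode b d0 d1 (f xs))"
proof -
  assume f: "DPR k f"
  have "DPR 1 (\<lambda>xs. peel_code b d0 d1 (xs!0))" unfolding peel_code_def by (intro dpr) auto
  hence "DPR k (\<lambda>xs. psnd ((peel_code b d0 d1 ^^ Suc (f xs)) (pair (Suc (f xs)) 0)))"
    by (intro dpr DPR_iter f)
  thus ?thesis by (simp add: bincode_def)
qed

section \<open>Coding the computation tree\<close>

text \<open>A tape half is coded by its symbols, nearest to the head first, as the digits
  to_nat a + 1 (so that no digit is 0) in a base exceeding all of them.\<close>
definition base :: "('q::finite, 's::finite) ptm \<Rightarrow> nat" where
  "base M = Suc (Suc (Max (range (to_nat :: 's \<Rightarrow> nat))))"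

lemma to_nat_less_base: "Suc (to_nat (a::'s)) < base (M :: ('q::finite, 's::finite) ptm)"
proof -
  have "to_nat a \<le> Max (range (to_nat :: 's \<Rightarrow> nat))" by (intro Max_ge) auto
  thus ?thesis unfolding base_def by linarith
qed

definition tape_code :: "('q::finite, 's::finite) ptm \<Rightarrow> 's list \<Rightarrow> nat" where
  "tape_code M t = digits_val (base M) (map (\<lambda>a. Suc (to_nat a)) t)"

definition push_code :: "('q::finite, 's::finite) ptm \<Rightarrow> nat \<Rightarrow> nat \<Rightarrow> nat" where
  "push_code M n b = n * base M + Suc b"

definition top_code :: "('q::finite, 's::finite) ptm \<Rightarrow> nat \<Rightarrow> nat" where
  "top_code M n = (if n = 0 then to_nat (blank_sym M) else n mod base M - 1)"

lemma top_code_0[simp]: "top_code M 0 = to_nat (blank_sym M)"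
  by (simp add: top_code_def)

lemma tape_code_Cons: "tape_code M (b # t) = push_code M (tape_code M t) (to_nat b)"
  by (simp add: tape_code_def push_code_def)

lemma tape_code_Cons': "tape_code M (b # t) = Suc (to_nat b) + tape_code M t * base M"
  by (simp add: tape_code_def)

lemma tape_code_Nil[simp]: "tape_code M [] = 0"
  by (simp add: tape_code_def)

lemma tape_code_eq_0[simp]: "tape_code M t = 0 \<longleftrightarrow> t = []"
  by (cases t) (simp_all add: tape_code_def)

lemma tape_code_tl: "tape_code M (tl t) = tape_code M t div base M"
proof (cases t)
  case (Cons b t')
  show ?thesis using to_nat_less_base[of b M] unfolding Cons tape_code_Cons'
    by (subst div_mult_self1) auto
qed (simp add: tape_code_def)

lemma top_code_tape: "top_code M (tape_code M t) = to_nat (if t = [] then blank_sym M else hd t)"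
proof (cases t)
  case (Cons b t')
  show ?thesis using to_nat_less_base[of b M] unfolding Cons tape_code_Cons' top_code_def
    by (subst mod_mult_self1) auto
qed (simp add: tape_code_def top_code_def)

lemma DPR_push_code[dpr]: "DPR k f \<Longrightarrow> DPR k g \<Longrightarrow> DPR k (\<lambda>xs. push_code M (f xs) (g xs))"
  unfolding push_code_def by (intro dpr)

lemma DPR_top_code[dpr]: "DPR k f \<Longrightarrow> DPR k (\<lambda>xs. top_code M (f xs))"
  unfolding top_code_def by (intro dpr)

definition config_code :: "('q::finite, 's::finite) ptm \<Rightarrow> ('q, 's) config \<Rightarrow> nat" where
  "config_code M C = (case C of (s, a, t, q) \<Rightarrow>
     pair (tape_code M (rev s)) (pair (tape_code M t) (pair (to_nat a) (to_nat q))))"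

text \<open>The arguments (i, q, a) of a transition are coded injectively; a function of them
  becomes a finitely supported function of the code.\<close>
definition trans_key :: "bool \<times> 'q::finite \<times> 's::finite \<Rightarrow> nat" where
  "trans_key p = (case p of (i, q, a) \<Rightarrow> pair (if i then 1 else 0) (pair (to_nat q) (to_nat a)))"

lemma inj_trans_key: "inj trans_key"
proof (rule injI)
  fix p p' :: "bool \<times> 'q::finite \<times> 's::finite" assume "trans_key p = trans_key p'"
  moreover obtain i q a i' q' a' where p: "p = (i, q, a)" "p' = (i', q', a')" by (cases p; cases p') auto
  ultimately have "pfst (trans_key p) = pfst (trans_key p')"
    "pfst (psnd (trans_key p)) = pfst (psnd (trans_key p'))"
    "psnd (psnd (trans_key p)) = psnd (psnd (trans_key p'))"
    by auto
  thus "p = p'" unfolding p trans_key_def by (auto split: if_splits)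
qed

definition table :: "(bool \<times> 'q::finite \<times> 's::finite \<Rightarrow> nat) \<Rightarrow> nat \<Rightarrow> nat" where
  "table g n = (if n \<in> range (trans_key :: bool \<times> 'q \<times> 's \<Rightarrow> nat) then g (inv trans_key n) else 0)"

lemma table_key[simp]: "table g (trans_key p) = g p"
  by (simp add: table_def inv_f_f[OF inj_trans_key])

lemma DPR_table[dpr]:
  fixes g :: "bool \<times> 'q::finite \<times> 's::finite \<Rightarrow> nat"
  assumes "DPR k f"
  shows "DPR k (\<lambda>xs. table g (f xs))"
proof (rule DPR_finite_support[OF _ assms])
  have "{n. table g n \<noteq> 0} \<subseteq> range (trans_key :: bool \<times> 'q \<times> 's \<Rightarrow> nat)"
    by (auto simp: table_def split: if_splits)
  thus "finite {n. table g n \<noteq> 0}" by (rule finite_subset) simp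
qed

definition trans :: "('q::finite, 's::finite) ptm \<Rightarrow> bool \<times> 'q \<times> 's \<Rightarrow> 'q \<times> 's \<times> move" where
  "trans M p = (case p of (i, q, a) \<Rightarrow> (if i then delta1 M else delta0 M) q a)"

definition next_state :: "('q::finite, 's::finite) ptm \<Rightarrow> nat \<Rightarrow> nat" where
  "next_state M = table (\<lambda>p. to_nat (fst (trans M p)))"

definition next_sym :: "('q::finite, 's::finite) ptm \<Rightarrow> nat \<Rightarrow> nat" where
  "next_sym M = table (\<lambda>p. to_nat (fst (snd (trans M p))))"

definition moves_right :: "('q::finite, 's::finite) ptm \<Rightarrow> nat \<Rightarrow> nat" where
  "moves_right M = table (\<lambda>p. case snd (snd (trans M p)) of MoveL \<Rightarrow> 0 | MoveR \<Rightarrow> 1)"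

definition step_code :: "('q::finite, 's::finite) ptm \<Rightarrow> nat \<Rightarrow> nat \<Rightarrow> nat" where
  "step_code M i c = (let l = pfst c; r = pfst (psnd c); a = pfst (psnd (psnd c));
       q = psnd (psnd (psnd c)); key = pair i (pair q a); b = next_sym M key; q' = next_state M key in
     if moves_right M key = 0
     then pair (l div base M) (pair (push_code M r b) (pair (top_code M l) q'))
     else pair (push_code M l b) (pair (r div base M) (pair (top_code M r) q')))"

lemma DPR_step_code[dpr]: "DPR k f \<Longrightarrow> DPR k g \<Longrightarrow> DPR k (\<lambda>xs. step_code M (f xs) (g xs))"
  unfolding step_code_def Let_def next_state_def next_sym_def moves_right_def by (intro dpr)

text \<open>A step moves one symbol between the two tape halves; butlast [] = [] and
  tl [] = [] let both boundary cases follow the general pattern.\<close>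
lemma step_uniform:
  assumes "trans M (i, q, a) = (q', b, m)"
  shows "step M i (s, a, t, q) = (case m of
      MoveL \<Rightarrow> (butlast s, if s = [] then blank_sym M else last s, b # t, q')
    | MoveR \<Rightarrow> (s @ [b], if t = [] then blank_sym M else hd t, tl t, q'))"
  using assms by (cases i; cases m) (auto simp: step_def apply_delta_def trans_def)

lemma step_code_correct: "step_code M (if i then 1 else 0) (config_code M C) = config_code M (step M i C)"
proof -
  obtain s a t q where C: "C = (s, a, t, q)" by (cases C) auto
  obtain q' b m where tr: "trans M (i, q, a) = (q', b, m)" by (cases "trans M (i, q, a)") auto
  have key: "pair (if i then 1 else 0) (pair (to_nat q) (to_nat a)) = trans_key (i, q, a)"
    by (simp add: trans_key_def)
  have "rev (butlast s) = tl (rev s)" by (metis butlast_rev rev_rev_ident)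
  hence left: "tape_code M (rev s) div base M = tape_code M (rev (butlast s))"
    "top_code M (tape_code M (rev s)) = to_nat (if s = [] then blank_sym M else last s)"
    by (simp_all add: tape_code_tl top_code_tape hd_rev)
  have right: "tape_code M t div base M = tape_code M (tl t)"
    "top_code M (tape_code M t) = to_nat (if t = [] then blank_sym M else hd t)"
    by (simp_all add: tape_code_tl top_code_tape)
  show ?thesis
    using left right
    by (cases m) (simp_all add: C step_uniform[OF tr] step_code_def config_code_def key tr
        next_state_def next_sym_def moves_right_def tape_code_Cons)
qed

definition final_flag :: "('q::finite, 's::finite) ptm \<Rightarrow> nat \<Rightarrow> nat" where
  "final_flag M n = (if n \<in> to_nat ` final_states M then 1 else 0)"

definition final_code :: "('q::finite, 's::finite) ptm \<Rightarrow> nat \<Rightarrow> bool" where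
  "final_code M c = (pfst (psnd c) = 0 \<and> final_flag M (psnd (psnd (psnd c))) = 1)"

lemma final_code_correct: "final_code M (config_code M C) \<longleftrightarrow> is_final M C"
  by (cases C) (simp add: final_code_def config_code_def final_flag_def is_final_def
      tape_code_eq_0 inj_image_mem_iff)

lemma DPRB_final_code[dpr]:
  assumes f: "DPR k f"
  shows "DPRB k (\<lambda>xs. final_code M (f xs))"
proof -
  have "finite {n. final_flag M n \<noteq> 0}"
    by (rule finite_subset[of _ "to_nat ` final_states M"]) (auto simp: final_flag_def split: if_splits)
  hence "DPR k (\<lambda>xs. final_flag M (psnd (psnd (psnd (f xs)))))"
    by (rule DPR_finite_support) (intro dpr f)
  thus ?thesis unfolding final_code_def by (intro dpr f)
qed

fun walk :: "('q, 's) ptm \<Rightarrow> ('q, 's) config option \<times> bool list \<Rightarrow> ('q, 's) config option \<times> bool list" where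
  "walk M (Some C, i # bs) = (if is_final M C then (None, []) else (Some (step M i C), bs))"
| "walk M p = p"

lemma walk_iter: "length bs \<le> n \<Longrightarrow> (walk M ^^ n) (Some C, bs) = (tree_label M C bs, [])"
proof (induction bs arbitrary: C n)
  case Nil
  have "(walk M ^^ n) (c, []) = (c, [])" for c n
    by (induction n) (auto elim: walk.elims)
  thus ?case by simp
next
  case (Cons i bs)
  then obtain n' where n': "n = Suc n'" "length bs \<le> n'" by (cases n) auto
  have "(walk M ^^ n') (None, []) = (None, [])" by (induction n') auto
  thus ?case using Cons.IH[OF n'(2)]
    by (simp add: n'(1) funpow_Suc_right del: funpow.simps)
qed

text \<open>Paths are coded with digits 1 (bit 0) and 2 (bit 1) in base 3; a walk state is coded
  as pair (configuration) (pair (path) (flag)), the flag marking that the tree was left.\<close>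
definition path_code :: "bool list \<Rightarrow> nat" where
  "path_code bs = digits_val 3 (map (\<lambda>b. if b then 2 else 1) bs)"

lemma bincode_path_code: "bincode 3 1 2 y = path_code (nat_to_bin y)"
  unfolding path_code_def bincode_correct ..

fun walk_enc :: "('q::finite, 's::finite) ptm \<Rightarrow> ('q, 's) config option \<times> bool list \<Rightarrow> nat" where
  "walk_enc M (Some C, bs) = pair (config_code M C) (pair (path_code bs) 0)"
| "walk_enc M (None, bs) = pair 0 (pair 0 1)"

definition walk_code :: "('q::finite, 's::finite) ptm \<Rightarrow> nat \<Rightarrow> nat" where
  "walk_code M w = (if psnd (psnd w) \<noteq> 0 \<or> pfst (psnd w) = 0 then w
     else if final_code M (pfst w) then pair 0 (pair 0 1)
     else pair (step_code M (if pfst (psnd w) mod 3 = 2 then 1 else 0) (pfst w))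
               (pair (pfst (psnd w) div 3) 0))"

lemma DPR_walk_code[dpr]: "DPR k f \<Longrightarrow> DPR k (\<lambda>xs. walk_code M (f xs))"
  unfolding walk_code_def by (intro dpr)

lemma walk_code_correct: "walk_code M (walk_enc M p) = walk_enc M (walk M p)"
proof -
  obtain c bs where p: "p = (c, bs)" by (cases p)
  show ?thesis
  proof (cases c)
    case None thus ?thesis by (simp add: p walk_code_def)
  next
    case (Some C)
    show ?thesis
    proof (cases bs)
      case Nil thus ?thesis by (simp add: p Some walk_code_def path_code_def)
    next
      case (Cons i bs')
      have "path_code bs = path_code bs' * 3 + (if i then 2 else 1)"
        by (simp add: path_code_def Cons)
      hence "path_code bs mod 3 = 2 \<longleftrightarrow> i" "path_code bs div 3 = path_code bs'" "path_code bs \<noteq> 0"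
        by auto
      thus ?thesis
        using step_code_correct[of M i C]
        by (auto simp: p Some Cons walk_code_def final_code_correct)
    qed
  qed
qed

definition init_code :: "('q::finite, 's::finite) ptm \<Rightarrow> nat \<Rightarrow> nat" where
  "init_code M x = (let t = bincode (base M) (Suc (to_nat (zero_sym M))) (Suc (to_nat (one_sym M))) x in
     pair 0 (pair (t div base M) (pair (top_code M t) (to_nat (init_state M)))))"

lemma DPR_init_code[dpr]: "DPR k f \<Longrightarrow> DPR k (\<lambda>xs. init_code M (f xs))"
  unfolding init_code_def Let_def by (intro dpr)

lemma init_code_correct: "init_code M x = config_code M (initial_config M (nat_to_bin x))"
proof -
  let ?w = "map (bit_sym M) (nat_to_bin x)"
  have "bincode (base M) (Suc (to_nat (zero_sym M))) (Suc (to_nat (one_sym M))) x = tape_code M ?w"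
    by (simp add: bincode_correct tape_code_def bit_sym_def comp_def if_distrib)
  thus ?thesis
    by (cases ?w) (simp_all add: init_code_def initial_config_def config_code_def
        tape_code_tl[symmetric] top_code_tape)
qed

text \<open>Node y is a leaf of CT_M(x) iff the walk from the initial configuration along the
  path of y (at most y steps long) ends in a final configuration without leaving the tree.\<close>
definition leaf_code :: "('q::finite, 's::finite) ptm \<Rightarrow> nat \<Rightarrow> nat \<Rightarrow> bool" where
  "leaf_code M x y = (let w = (walk_code M ^^ Suc y) (pair (init_code M x) (pair (bincode 3 1 2 y) 0))
     in psnd (psnd w) = 0 \<and> final_code M (pfst w))"

lemma DPRB_leaf_code[dpr]: "DPR k f \<Longrightarrow> DPR k g \<Longrightarrow> DPRB k (\<lambda>xs. leaf_code M (f xs) (g xs))"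
proof -
  assume "DPR k f" "DPR k g"
  moreover have "DPR 1 (\<lambda>xs. walk_code M (xs!0))" by (intro dpr) auto
  ultimately show ?thesis unfolding leaf_code_def Let_def by (intro dpr DPR_iter) auto
qed

lemma leaf_code_correct: "leaf_code M x y \<longleftrightarrow> is_leaf M x y"
proof -
  have iter: "(walk_code M ^^ n) (walk_enc M p) = walk_enc M ((walk M ^^ n) p)" for n p
    by (induction n) (auto simp: walk_code_correct)
  have "pair (init_code M x) (pair (bincode 3 1 2 y) 0) =
        walk_enc M (Some (initial_config M (nat_to_bin x)), nat_to_bin y)"
    unfolding init_code_correct bincode_path_code by simp
  hence "(walk_code M ^^ Suc y) (pair (init_code M x) (pair (bincode 3 1 2 y) 0)) =
         walk_enc M (CT_label M x (nat_to_bin y), [])"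
    using bitlen_le[of y] by (simp only: iter walk_iter CT_label_def le_SucI)
  thus ?thesis unfolding leaf_code_def is_leaf_def Let_def
    by (cases "CT_label M x (nat_to_bin y)") (auto simp: final_code_correct)
qed

section \<open>The halting probabilities PT0 as reciprocals of computable numbers\<close>

definition prefix_free :: "bool list set \<Rightarrow> bool" where
  "prefix_free A \<longleftrightarrow> (\<forall>u\<in>A. \<forall>w. u @ w \<in> A \<longrightarrow> w = [])"

text \<open>Needed to see that the leaves found so far never exhaust the probability mass.\<close>
lemma kraft:
  assumes "finite A" "prefix_free A" "\<forall>w\<in>A. length w \<le> n"
  shows "(\<Sum>w\<in>A. (1/2::real) ^ length w) \<le> 1"
  using assms
proof (induction n arbitrary: A)
  case 0
  hence "A = {} \<or> A = {[]}" by auto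
  thus ?case by auto
next
  case (Suc n)
  show ?case
  proof (cases "[] \<in> A")
    case True
    have "v = []" if "v \<in> A" for v
      using Suc.prems(2) True that unfolding prefix_free_def by (metis append_Nil)
    hence "A = {[]}" using True by blast
    thus ?thesis by simp
  next
    case False
    define child where "child b = {w. b # w \<in> A}" for b
    have child: "finite (child b)" "prefix_free (child b)" "\<forall>w\<in>child b. length w \<le> n" for b
    proof -
      have "child b = Cons b -` A" by (auto simp: child_def)
      moreover have "inj (Cons b)" by (simp add: inj_on_def)
      ultimately show "finite (child b)" using finite_vimageI[OF Suc.prems(1)] by metis
      show "prefix_free (child b)"
        using Suc.prems(2) unfolding prefix_free_def child_def by (metis Cons_eq_appendI mem_Collect_eq)
      show "\<forall>w\<in>child b. length w \<le> n" using Suc.prems(3) unfolding child_def by fastforce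
    qed
    have split: "A = Cons False ` child False \<union> Cons True ` child True"
    proof
      show "A \<subseteq> Cons False ` child False \<union> Cons True ` child True"
      proof
        fix v assume "v \<in> A"
        with False obtain b w where "v = b # w" by (cases v) auto
        thus "v \<in> Cons False ` child False \<union> Cons True ` child True"
          using \<open>v \<in> A\<close> by (cases b) (auto simp: child_def)
      qed
    qed (auto simp: child_def)
    have "(\<Sum>w\<in>A. (1/2::real) ^ length w)
          = (1/2) * (\<Sum>w\<in>child False. (1/2) ^ length w) + (1/2) * (\<Sum>w\<in>child True. (1/2) ^ length w)"
      unfolding split using child(1)
      by (subst sum.union_disjoint) (auto simp: sum.reindex sum_distrib_left)
    also have "\<dots> \<le> (1/2) * 1 + (1/2) * 1"
      using Suc.IH[OF child] by (intro add_mono mult_left_mono) auto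
    finally show ?thesis by simp
  qed
qed

lemma tree_label_append: "tree_label M C (u @ w) =
   (case tree_label M C u of None \<Rightarrow> None | Some C' \<Rightarrow> tree_label M C' w)"
  by (induction u arbitrary: C) auto

lemma nat_to_bin_inverse: "foldl (\<lambda>a c. 2 * a + (if c then 2 else 1)) 0 (nat_to_bin n) = n"
proof (induction n rule: nat_to_bin.induct)
  case (2 n)
  have "2 * (n div 2) + (if odd n then 2 else 1) = Suc n" by presburger
  thus ?case using 2 by simp
qed simp

lemma inj_nat_to_bin: "inj nat_to_bin"
  by (rule inj_on_inverseI[where g="foldl (\<lambda>a c. 2 * a + (if c then 2 else 1)) 0"])
    (rule nat_to_bin_inverse)

context
  fixes M :: "('q::finite, 's::finite) ptm" and x :: nat
begin

definition leaf_mass :: "nat \<Rightarrow> real" where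
  "leaf_mass y = (\<Sum>k\<in>{k. k < y \<and> is_leaf M x k}. (1/2) ^ bitlen k)"

text \<open>A leaf has no proper descendants in the tree, so the strings of leaves are
  prefix-free and Kraft's inequality bounds their mass.\<close>
lemma leaf_mass_le_1: "leaf_mass y \<le> 1"
proof -
  let ?K = "{k. k < y \<and> is_leaf M x k}"
  have "leaf_mass y = (\<Sum>w\<in>nat_to_bin ` ?K. (1/2) ^ length w)"
    unfolding leaf_mass_def by (subst sum.reindex) (auto intro: inj_on_subset[OF inj_nat_to_bin])
  also have "\<dots> \<le> 1"
  proof (rule kraft)
    show "\<forall>w\<in>nat_to_bin ` ?K. length w \<le> y"
    proof
      fix w assume "w \<in> nat_to_bin ` ?K"
      then obtain k where "w = nat_to_bin k" "k < y" by auto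
      thus "length w \<le> y" using bitlen_le[of k] by simp
    qed
    show "prefix_free (nat_to_bin ` ?K)" unfolding prefix_free_def
    proof (intro ballI allI impI)
      fix u w assume "u \<in> nat_to_bin ` ?K" "u @ w \<in> nat_to_bin ` ?K"
      then obtain C where C: "CT_label M x u = Some C" "is_final M C"
        and in_tree: "CT_label M x (u @ w) \<noteq> None"
        unfolding is_leaf_def by fastforce
      show "w = []"
      proof (rule ccontr)
        assume "w \<noteq> []"
        then obtain i w' where "w = i # w'" by (cases w) auto
        with C have "CT_label M x (u @ w) = None" unfolding CT_label_def by (simp add: tree_label_append)
        thus False using in_tree by contradiction
      qed
    qed
  qed simp
  finally show ?thesis .
qed

lemma leaf_mass_Suc: "leaf_mass (Suc y) = leaf_mass y + (if is_leaf M x y then (1/2) ^ bitlen y else 0)"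
proof -
  have "{k. k < Suc y \<and> is_leaf M x k}
        = (if is_leaf M x y then insert y {k. k < y \<and> is_leaf M x k} else {k. k < y \<and> is_leaf M x k})"
    by (auto simp: less_Suc_eq)
  thus ?thesis unfolding leaf_mass_def by simp
qed

lemma PT_prod_leaf_mass: "PT_prod M x y = 1 - leaf_mass y"
proof (induction y)
  case (Suc y)
  show ?case
  proof (cases "is_leaf M x y")
    case True
    have "leaf_mass y + (1/2) ^ bitlen y \<le> 1" using leaf_mass_le_1[of "Suc y"] True by (simp add: leaf_mass_Suc)
    moreover have "(0::real) < (1/2) ^ bitlen y" by simp
    ultimately have "1 - leaf_mass y > 0" by linarith
    thus ?thesis using True by (simp add: Suc leaf_mass_Suc PT_def field_simps)
  qed (simp add: Suc leaf_mass_Suc)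
qed (simp add: leaf_mass_def)

end

text \<open>Scaled by 2^|y| the leaf mass becomes a natural number, computed by a
  primitive recursive sum.  Its complement is the denominator of PT0.\<close>
definition leaf_weight :: "('q::finite, 's::finite) ptm \<Rightarrow> nat \<Rightarrow> nat \<Rightarrow> nat" where
  "leaf_weight M x y = (\<Sum>k<y. if leaf_code M x k then 2 ^ (bitlen y - bitlen k) else 0)"

definition denom :: "('q::finite, 's::finite) ptm \<Rightarrow> nat \<Rightarrow> nat \<Rightarrow> nat" where
  "denom M x y = 2 ^ bitlen y - leaf_weight M x y"

lemma leaf_weight_real: "real (leaf_weight M x y) = 2 ^ bitlen y * leaf_mass M x y"
proof -
  have term_eq: "real (if is_leaf M x k then 2 ^ (bitlen y - bitlen k) else 0) =
           (if is_leaf M x k then 2 ^ bitlen y * (1/2) ^ bitlen k else 0)" if "k < y" for k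
  proof -
    have "bitlen k \<le> bitlen y" using bitlen_mono that by simp
    hence "(2::real) ^ (bitlen y - bitlen k) = 2 ^ bitlen y / 2 ^ bitlen k" by (rule power_diff[rotated]) simp
    thus ?thesis by (simp add: power_one_over)
  qed
  have "real (leaf_weight M x y) = (\<Sum>k<y. real (if is_leaf M x k then 2 ^ (bitlen y - bitlen k) else 0))"
    unfolding leaf_weight_def leaf_code_correct by (rule of_nat_sum)
  also have "\<dots> = (\<Sum>k<y. (if is_leaf M x k then 2 ^ bitlen y * (1/2) ^ bitlen k else 0))"
    by (rule sum.cong) (auto simp only: term_eq lessThan_iff)
  also have "\<dots> = (\<Sum>k\<in>{k\<in>{..<y}. is_leaf M x k}. 2 ^ bitlen y * (1/2) ^ bitlen k)"
    by (rule sum.inter_filter[symmetric]) simp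
  also have "{k\<in>{..<y}. is_leaf M x k} = {k. k < y \<and> is_leaf M x k}" by auto
  also have "(\<Sum>k\<in>{k. k < y \<and> is_leaf M x k}. 2 ^ bitlen y * (1/2::real) ^ bitlen k)
             = 2 ^ bitlen y * leaf_mass M x y"
    unfolding leaf_mass_def by (rule sum_distrib_left[symmetric])
  finally show ?thesis .
qed

lemma PT0_denom:
  assumes leaf: "is_leaf M x y"
  shows "1 \<le> denom M x y" "PT0 M x y = 1 / real (denom M x y)"
proof -
  have "leaf_mass M x y + (1/2) ^ bitlen y \<le> 1"
    using leaf_mass_le_1[of M x "Suc y"] leaf by (simp add: leaf_mass_Suc)
  hence "2 ^ bitlen y * (leaf_mass M x y + (1/2) ^ bitlen y) \<le> (2::real) ^ bitlen y * 1"
    by (intro mult_left_mono) auto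
  hence "real (leaf_weight M x y) + 1 \<le> 2 ^ bitlen y"
    by (simp add: leaf_weight_real distrib_left power_one_over)
  hence "real (leaf_weight M x y + 1) \<le> real (2 ^ bitlen y)" by simp
  hence le: "leaf_weight M x y + 1 \<le> 2 ^ bitlen y" by (simp only: of_nat_le_iff)
  thus "1 \<le> denom M x y" by (simp add: denom_def)
  have "real (denom M x y) = 2 ^ bitlen y * (1 - leaf_mass M x y)"
    using le by (simp add: denom_def of_nat_diff leaf_weight_real algebra_simps)
  thus "PT0 M x y = 1 / real (denom M x y)"
    using leaf by (simp add: PT0_def PT_prod_leaf_mass PT_def power_one_over)
qed

lemma DPR_denom[dpr]:
  assumes "DPR k f" "DPR k g"
  shows "DPR k (\<lambda>xs. denom M (f xs) (g xs))"
proof -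
  let ?G = "\<lambda>ys. ys!3 + (if leaf_code M (ys!0) (ys!2) then 2 ^ (bitlen (ys!1) - bitlen (ys!2)) else 0)"
  have rec: "DPR 2 (\<lambda>xs. 2 ^ bitlen (xs!1) - prec (\<lambda>_. 0) ?G xs (xs!1))"
    by (intro dpr DPR_prec) auto
  have sum: "prec (\<lambda>_. 0) ?G xs (xs!1) = leaf_weight M (xs!0) (xs!1)" if "length xs = 2" for xs
  proof -
    have partial: "prec (\<lambda>_. 0) ?G xs n
          = (\<Sum>k<n. if leaf_code M (xs!0) k then 2 ^ (bitlen (xs!1) - bitlen k) else 0)" for n
      using that by (induction n) (auto simp: nth_append numeral_3_eq_3)
    show ?thesis unfolding leaf_weight_def by (rule partial)
  qed
  from rec have "DPR 2 (\<lambda>xs. denom M (xs!0) (xs!1))"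
    by (rule DPR_cong) (simp only: denom_def sum)
  thus ?thesis using assms by (rule DPR_op2)
qed

section \<open>Sampling a bit with probability PT0\<close>

text \<open>Digit z of the (non-terminating) binary expansion 1/b = 0.d0 d1 d2 ... is the parity
  of (2^(z+1) - 1) div b.  Using 2^(z+1) - 1 rather than 2^(z+1) makes the expansion of
  1/1 = 0.111... work as well.\<close>
definition recip_digit :: "nat \<Rightarrow> nat \<Rightarrow> bool" where
  "recip_digit b z \<longleftrightarrow> ((2 ^ Suc z - 1) div b) mod 2 = 1"

lemma recip_prefix_Suc: "(2 ^ Suc n - 1) div b = 2 * ((2 ^ n - 1) div b) + ((2 ^ Suc n - 1) div b) mod (2::nat)"
proof -
  have "1 \<le> (2::nat) ^ n" by simp
  hence halve: "(2 ^ Suc n - 1) div 2 = (2::nat) ^ n - 1" by (simp only: power_Suc)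
  have "(2 ^ Suc n - 1) div b div 2 = (2 ^ Suc n - 1) div (2 * b)"
    by (simp add: div_mult2_eq mult.commute)
  also have "\<dots> = (2 ^ Suc n - 1) div 2 div b" by (rule div_mult2_eq)
  finally have "(2 ^ Suc n - 1) div b div 2 = (2 ^ n - 1) div b" by (simp only: halve)
  thus ?thesis by (metis div_mult_mod_eq mult.commute)
qed

lemma recip_digits_sums:
  assumes "0 < b"
  shows "(\<lambda>z. (1/2::real) ^ Suc z * (if recip_digit b z then 1 else 0)) sums (1 / real b)"
proof -
  let ?f = "\<lambda>z. (1/2::real) ^ Suc z * (if recip_digit b z then 1 else 0)"
  let ?q = "\<lambda>n. (2 ^ n - 1) div b"
  have partial: "(\<Sum>z<n. ?f z) = real (?q n) / 2 ^ n" for n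
  proof (induction n)
    case (Suc n)
    have "real (?q (Suc n)) = 2 * real (?q n) + (if recip_digit b n then 1 else 0)"
      by (subst recip_prefix_Suc) (auto simp: recip_digit_def mod_2_eq_odd)
    thus ?case using Suc by (simp add: field_simps power_one_over)
  qed simp
  have error: "real (?q n) / 2 ^ n = 1 / real b - real (Suc ((2 ^ n - 1) mod b)) / (real b * 2 ^ n)" for n
  proof -
    have "b * ?q n + (2 ^ n - 1) mod b = 2 ^ n - 1"
      using div_mult_mod_eq[of "2 ^ n - 1" b] by (simp add: mult.commute)
    moreover have "1 \<le> (2::nat) ^ n" by simp
    ultimately have "(2::nat) ^ n = b * ?q n + Suc ((2 ^ n - 1) mod b)" by linarith
    hence "real (2 ^ n) = real (b * ?q n + Suc ((2 ^ n - 1) mod b))" by (rule arg_cong)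
    hence eqn: "(2::real) ^ n = real b * real (?q n) + real (Suc ((2 ^ n - 1) mod b))"
      by (simp only: of_nat_add of_nat_mult of_nat_power of_nat_numeral)
    have key: "q / P = 1 / c - r / (c * P)" if "P = c * q + r" "c > 0" "P > 0" for P c q r :: real
    proof -
      have "1 / c - r / (c * P) = (P - r) / (c * P)" using that(2,3) by (simp add: field_simps)
      also have "P - r = c * q" using that by simp
      finally show ?thesis using that by simp
    qed
    show ?thesis by (rule key[OF eqn]) (use assms in auto)
  qed
  have small: "real (Suc ((2 ^ n - 1) mod b)) / (real b * 2 ^ n) \<le> (1/2) ^ n" for n
  proof -
    have "real (Suc ((2 ^ n - 1) mod b)) \<le> real b"
      using assms by (simp del: of_nat_Suc add: Suc_le_eq)
    hence "real (Suc ((2 ^ n - 1) mod b)) / (real b * 2 ^ n) \<le> real b / (real b * 2 ^ n)"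
      by (rule divide_right_mono) simp
    also have "\<dots> = (1/2) ^ n" using assms by (simp add: power_one_over)
    finally show ?thesis .
  qed
  have "(\<lambda>n. real (Suc ((2 ^ n - 1) mod b)) / (real b * 2 ^ n)) \<longlonglongrightarrow> 0"
  proof (rule tendsto_sandwich[of "\<lambda>_. 0" _ _ "\<lambda>n. (1/2) ^ n"])
    show "\<forall>\<^sub>F n in sequentially. real (Suc ((2 ^ n - 1) mod b)) / (real b * 2 ^ n) \<le> (1/2) ^ n"
      using small by (intro always_eventually allI)
  qed (simp_all add: LIMSEQ_power_zero)
  from tendsto_diff[OF tendsto_const[of "1 / real b"] this]
  have "(\<lambda>n. real (?q n) / 2 ^ n) \<longlonglongrightarrow> 1 / real b"
    unfolding error by simp
  thus ?thesis unfolding sums_def partial .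
qed

lemma half_powers_sums: "(\<lambda>z. (1/2::real) ^ Suc z) sums 1"
  using sums_mult[OF geometric_sums[of "1/2::real"], of "1/2"] by simp

lemma infsum_nonneg_sums: "f sums (s::real) \<Longrightarrow> (\<And>n. 0 \<le> f n) \<Longrightarrow> infsum f UNIV = s"
  by (rule infsumI, rule sums_nonneg_imp_has_sum)

lemma geometric_mixture:
  fixes w :: nat
  assumes Q: "(\<lambda>z. (1/2::real) ^ Suc z * (if Q z then 1 else 0)) sums p"
  shows "(\<Sum>\<^sub>\<infinity>z. (1/2::real) ^ Suc z * (if w = (if Q z then 0 else 1) then 1 else 0))
         = (if w = 0 then p else if w = 1 then 1 - p else 0)"
    (is "infsum ?f UNIV = _")
proof -
  consider "w = 0" | "w = 1" | "w \<noteq> 0" "w \<noteq> 1" by blast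
  thus ?thesis
  proof cases
    case 1
    hence "?f = (\<lambda>z. (1/2) ^ Suc z * (if Q z then 1 else 0))" by (intro ext) simp
    thus ?thesis using infsum_nonneg_sums[OF Q] 1 by simp
  next
    case 2
    hence "?f = (\<lambda>z. (1/2) ^ Suc z - (1/2) ^ Suc z * (if Q z then 1 else 0))" by (intro ext) simp
    moreover have "?f sums (1 - p)"
      unfolding calculation by (rule sums_diff[OF half_powers_sums Q])
    ultimately show ?thesis using infsum_nonneg_sums[of ?f] 2 by simp
  next
    case 3
    hence "?f = (\<lambda>_. 0)" by (intro ext) simp
    thus ?thesis using 3 by simp
  qed
qed

definition decide :: "('q::finite, 's::finite) ptm \<Rightarrow> nat list \<Rightarrow> nat" where
  "decide M xs = (if leaf_code M (xs!0) (xs!1) \<and> recip_digit (denom M (xs!0) (xs!1)) (xs!2) then 0 else 1)"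

lemma DPR_decide: "DPR 3 (decide M)"
proof -
  have "DPR 3 (\<lambda>xs. if leaf_code M (xs!0) (xs!1) \<and>
          ((2 ^ Suc (xs!2) - 1) div denom M (xs!0) (xs!1)) mod 2 = 1 then 0 else 1)"
    by (intro dpr) auto
  thus ?thesis unfolding decide_def recip_digit_def .
qed

lemma decide_eq_0: "decide M xs = 0 \<longleftrightarrow> leaf_code M (xs!0) (xs!1) \<and> recip_digit (denom M (xs!0) (xs!1)) (xs!2)"
  by (auto simp: decide_def)

lemma decide_0_1: "(if decide M xs = 0 then 0 else 1) = decide M xs"
  by (simp add: decide_def)

lemma PT0_sums: "(\<lambda>z. (1/2::real) ^ Suc z * (if decide M [x, y, z] = 0 then 1 else 0)) sums PT0 M x y"
proof (cases "is_leaf M x y")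
  case True
  thus ?thesis using recip_digits_sums[of "denom M x y"] PT0_denom[OF True]
    by (simp add: decide_eq_0 leaf_code_correct)
qed (simp add: decide_eq_0 leaf_code_correct PT0_def)

lemma PTC_mixture: "PTC M x y w = (\<Sum>\<^sub>\<infinity>z. (1/2::real) ^ Suc z * point_pf (decide M) [x, y, z] w)"
proof -
  have "PTC M x y w = (if w = 0 then PT0 M x y else if w = 1 then 1 - PT0 M x y else 0)"
    by (simp add: PTC_def PT1_def PT0_def)
  also have "\<dots> = (\<Sum>\<^sub>\<infinity>z. (1/2) ^ Suc z * (if w = (if decide M [x, y, z] = 0 then 0 else 1) then 1 else 0))"
    by (rule geometric_mixture[OF PT0_sums, symmetric])
  also have "\<dots> = (\<Sum>\<^sub>\<infinity>z. (1/2) ^ Suc z * point_pf (decide M) [x, y, z] w)"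
    by (simp only: decide_0_1 point_pf_def)
  finally show ?thesis .
qed

text \<open>A fair coin, and the geometric distribution 2^-(z+1) as the number of failed tosses
  before the first success.\<close>
definition coin :: pf where "coin xs w = (if w = 0 \<or> w = 1 then 1/2 else 0)"

lemma PR_rep_coin: "PR_rep k coin"
proof -
  have "PR_rep k (\<lambda>xs. pf_rand (map (\<lambda>g. g xs) [\<lambda>_. 0]))"
    by (rule PR_rep_comp) (use PR_rep_PR[OF PR_rand] in \<open>auto intro: DPR_const\<close>)
  thus ?thesis by (rule PR_rep_cong) (auto simp: coin_def pf_rand_def fun_eq_iff)
qed

lemma PR_rep_geometric: "PR_rep k (\<lambda>_ z. (1/2) ^ Suc z)"
proof -
  have mass: "(\<Sum>\<^sub>\<infinity>j\<in>{0<..}. coin xs j) = 1/2" for xs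
    by (subst infsum_single_support[of 1]) (auto simp: coin_def)
  have "pf_mu coin xs = (\<lambda>z. (1/2) ^ Suc z)" for xs
    unfolding fun_eq_iff pf_mu_def mass by (simp add: coin_def)
  thus ?thesis by (rule PR_rep_cong[OF PR_rep_mu[OF PR_rep_coin]])
qed

text \<open>Feeding a random extra argument, drawn from a PR distribution, into a deterministic
  function: a single recursion step with the drawn value as the previous value.\<close>
lemma PR_rep_mix:
  assumes P: "PR_rep k P" and h: "DPR (k+1) h"
  shows "PR_rep k (\<lambda>xs w. \<Sum>\<^sub>\<infinity>z. P xs z * point_pf h (xs @ [z]) w)"
proof -
  define G where "G ys = h (map (\<lambda>i. ys!i) [0..<k] @ [ys ! (k+1)])" for ys
  have "DPR (k+2) (\<lambda>ys. h (map (\<lambda>g. g ys) (map (\<lambda>i ys. ys!i) [0..<k] @ [\<lambda>ys. ys!(k+1)])))"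
    by (rule DPR_comp) (use h in \<open>auto intro: DPR_proj\<close>)
  hence "DPR (k+2) G"
    by (rule DPR_cong) (simp add: G_def o_def)
  hence step: "PR_rep (k+1) (\<lambda>ys. pf_primrec_aux P (point_pf G) (butlast ys) (last ys))"
    using PR_rep_primrec[OF P] unfolding DPR_def by simp
  have "PR_rep k (\<lambda>xs. (\<lambda>ys. pf_primrec_aux P (point_pf G) (butlast ys) (last ys))
                        (map (\<lambda>g. g xs) (map (\<lambda>i xs. xs!i) [0..<k] @ [\<lambda>_. 1])))"
    by (rule PR_rep_comp) (use step in \<open>auto intro: DPR_proj DPR_const\<close>)
  thus ?thesis
  proof (rule PR_rep_cong)
    fix xs :: "nat list" assume len: "length xs = k"
    have args: "map (\<lambda>i. xs!i) [0..<k] = xs" using map_nth[of xs] len by simp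
    have "map (\<lambda>i. (xs @ [0, z]) ! i) [0..<k] = map (\<lambda>i. xs!i) [0..<k]" for z
      using len by (intro map_cong) (auto simp: nth_append)
    hence G_step: "G (xs @ [0, z]) = h (xs @ [z])" for z
      using len args by (simp add: G_def nth_append)
    show "(\<lambda>ys. pf_primrec_aux P (point_pf G) (butlast ys) (last ys))
            (map (\<lambda>g. g xs) (map (\<lambda>i xs. xs!i) [0..<k] @ [\<lambda>_. 1]))
          = (\<lambda>w. \<Sum>\<^sub>\<infinity>z. P xs z * point_pf h (xs @ [z]) w)"
      by (simp add: o_def args point_pf_def G_step)
  qed
qed

theorem mainTheorem10:
  fixes M :: "('q::finite, 's::finite) ptm"
  assumes "wf_ptm M"
  shows "\<exists>f. PR 2 f \<and> (\<forall>x y. f [x, y] = PTC M x y)"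
proof -
  have "DPR (2+1) (decide M)" using DPR_decide by simp
  from PR_rep_mix[OF PR_rep_geometric this]
  have "PR_rep 2 (\<lambda>xs w. \<Sum>\<^sub>\<infinity>z. (1/2) ^ Suc z * point_pf (decide M) (xs @ [z]) w)" .
  then obtain f where f: "PR 2 f"
    "\<And>xs. length xs = 2 \<Longrightarrow> f xs = (\<lambda>w. \<Sum>\<^sub>\<infinity>z. (1/2) ^ Suc z * point_pf (decide M) (xs @ [z]) w)"
    unfolding PR_rep_def by blast
  have "f [x, y] = PTC M x y" for x y
    using f(2)[of "[x, y]"] by (simp add: PTC_mixture fun_eq_iff)
  with f(1) show ?thesis by blast
qed

end
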